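(* Let $\Gamma=([n],E)$ be a connected simple graph and let $M\subseteq[n]$ be a subset of maximal cardinality such that the induced subgraph $\Gamma|_M$ is isomorphic to the path $L_{|M|}$. Then for every integer $k\ge|M|$ the polytopes $Q_{\Gamma,k}$ and $Q_{\Gamma,|M|-1}$ are normally equivalent, i.e. their normal fans coincide.
   Context: $L_r$ is the path graph on $r$ vertices. For $S\subseteq[n]$ nonempty, $\Delta_S=\mathrm{conv}\{e_s:s\in S\}\subset\mathbb{R}^n$, $e_s$ the standard basis vectors. For an integer $m\ge0$, the $m$-graph polytope is the Minkowski sum $Q_{\Gamma,m}=\sum_{S}\Delta_S$ over all nonempty $S\subseteq[n]$ with $|S|\le m+1$ and $\Gamma|_S$ connected. *)

theory Defs
  imports "HOL-Analysis.Analysis"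
begin

text \<open>Vertex set [n] is modelled by a finite type 'n; the ambient space R^n by real^'n.
  A simple graph is a symmetric irreflexive relation E on 'n.\<close>

definition simple_graph :: "('n \<Rightarrow> 'n \<Rightarrow> bool) \<Rightarrow> bool" where
  "simple_graph E \<longleftrightarrow> (\<forall>x y. E x y \<longrightarrow> E y x) \<and> (\<forall>x. \<not> E x x)"

definition graph_connected :: "('n \<Rightarrow> 'n \<Rightarrow> bool) \<Rightarrow> bool" where
  "graph_connected E \<longleftrightarrow> (\<forall>x y. E\<^sup>*\<^sup>* x y)"

definition induced_connected :: "('n \<Rightarrow> 'n \<Rightarrow> bool) \<Rightarrow> 'n set \<Rightarrow> bool" where
  "induced_connected E S \<longleftrightarrow>
     (\<forall>x\<in>S. \<forall>y\<in>S. (\<lambda>a b. E a b \<and> a \<in> S \<and> b \<in> S)\<^sup>*\<^sup>* x y)"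

definition induced_path :: "('n \<Rightarrow> 'n \<Rightarrow> bool) \<Rightarrow> 'n set \<Rightarrow> bool" where
  "induced_path E M \<longleftrightarrow>
     (\<exists>f. bij_betw f {0..<card M} M \<and>
          (\<forall>i<card M. \<forall>j<card M. E (f i) (f j) \<longleftrightarrow> (Suc i = j \<or> Suc j = i)))"

definition simplex_of :: "'n set \<Rightarrow> (real^'n) set" where
  "simplex_of S = convex hull ((\<lambda>s. axis s 1) ` S)"

definition minkowski_sum :: "'a set \<Rightarrow> ('a \<Rightarrow> (real^'n) set) \<Rightarrow> (real^'n) set" where
  "minkowski_sum F P = {x. \<exists>p. (\<forall>S\<in>F. p S \<in> P S) \<and> x = (\<Sum>S\<in>F. p S)}"

definition graph_polytope :: "('n::finite \<Rightarrow> 'n \<Rightarrow> bool) \<Rightarrow> nat \<Rightarrow> (real^'n) set" where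
  "graph_polytope E m =
     minkowski_sum {S. S \<noteq> {} \<and> card S \<le> m + 1 \<and> induced_connected E S} simplex_of"

definition normal_cone :: "(real^'n) set \<Rightarrow> (real^'n) set \<Rightarrow> (real^'n) set" where
  "normal_cone P F = {u. \<forall>x\<in>F. \<forall>y\<in>P. u \<bullet> y \<le> u \<bullet> x}"

definition normal_fan :: "(real^'n) set \<Rightarrow> (real^'n) set set" where
  "normal_fan P = {normal_cone P F | F. F face_of P \<and> F \<noteq> {}}"

end

theory Submission
  imports Defs
begin

text \<open>For u in R^n, the u-maximal face of a Minkowski sum of simplices Delta_T is the sum of the
  faces Delta_{A_T(u)}, where A_T(u) is the set of vertices of T of maximal u-coordinate; so the
  normal fan only depends on the relation "A_T(u) \<subseteq> A_T(v) for all T". If S is connected,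
  s \<in> A_S(u) and t \<in> S, a shortest path from s to t inside S is induced, hence has at most |M|
  vertices; s maximises u on this path, so by the condition for small sets it maximises v there,
  giving v_t \<le> v_s. Hence the connected sets with more than |M| vertices add no new conditions.\<close>

section \<open>Short induced paths in connected sets\<close>

lemma relpowp_walk_segment:
  assumes walk: "\<forall>k<n. R (f k) (f (Suc k))" and "a \<le> b" "b \<le> n"
  shows "(R ^^ (b - a)) (f a) (f b)"
  unfolding relpowp_fun_conv
  by (rule exI[of _ "\<lambda>k. f (a + k)"]) (use assms in auto)

lemma relpowp_walk_shortcut:
  assumes walk: "\<forall>k<n. R (f k) (f (Suc k))" and "i \<le> j" "j \<le> n"
    and "(R ^^ m) (f i) (f j)"
  shows "(R ^^ (i + m + (n - j))) (f 0) (f n)"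
proof -
  have "(R ^^ i) (f 0) (f i)"
    using relpowp_walk_segment[where R=R and f=f, OF walk, of 0 i] assms by simp
  moreover have "(R ^^ (n - j)) (f j) (f n)"
    using relpowp_walk_segment[where R=R and f=f, OF walk, of j n] assms by simp
  ultimately show ?thesis using assms(4) unfolding relpowp_add by blast
qed

lemma shortest_walk_induced_path:
  assumes "simple_graph E"
    and walk: "\<forall>k<n. E (f k) (f (Suc k))"
    and shortest: "\<forall>m<n. \<not> (E ^^ m) (f 0) (f n)"
  shows "induced_path E (f ` {0..n})"
proof -
  have sym: "E x y \<Longrightarrow> E y x" and irrefl: "\<not> E x x" for x y
    using assms(1) unfolding simple_graph_def by auto
  have no_chord: "\<not> E (f i) (f j)" if "Suc i < j" "j \<le> n" for i j
  proof
    assume "E (f i) (f j)"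
    then have "(E ^^ 1) (f i) (f j)" by (simp only: relpowp_1)
    from relpowp_walk_shortcut[where R=E and f=f, OF walk _ _ this] that
    have "(E ^^ (i + 1 + (n - j))) (f 0) (f n)" by simp
    moreover have "i + 1 + (n - j) < n" using that by simp
    ultimately show False using shortest by blast
  qed
  have inj: "inj_on f {0..n}"
  proof (rule linorder_inj_onI')
    fix i j assume ij: "i \<in> {0..n}" "j \<in> {0..n}" "i < j"
    show "f i \<noteq> f j"
    proof
      assume "f i = f j"
      then have "(E ^^ 0) (f i) (f j)" by simp
      from relpowp_walk_shortcut[where R=E and f=f, OF walk _ _ this] ij
      have "(E ^^ (i + 0 + (n - j))) (f 0) (f n)" by simp
      moreover have "i + 0 + (n - j) < n" using ij by simp
      ultimately show False using shortest by blast
    qed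
  qed
  have edge_iff: "E (f i) (f j) \<longleftrightarrow> Suc i = j \<or> Suc j = i" if "i \<le> n" "j \<le> n" for i j
  proof
    assume edge: "E (f i) (f j)"
    consider "i = j" | "Suc i < j" | "Suc j < i" | "Suc i = j \<or> Suc j = i" by linarith
    then show "Suc i = j \<or> Suc j = i"
      using edge that no_chord[of i j] no_chord[of j i] sym[OF edge] irrefl[of "f i"] by cases auto
  next
    assume "Suc i = j \<or> Suc j = i"
    then show "E (f i) (f j)"
    proof
      assume "Suc j = i"
      then have "E (f j) (f i)" using walk that by auto
      then show ?thesis by (rule sym)
    qed (use walk that in auto)
  qed
  have "card (f ` {0..n}) = Suc n" using card_image[OF inj] by simp
  then show ?thesis
    unfolding induced_path_def using inj edge_iff
    by (intro exI[of _ f]) (auto simp: bij_betw_def atLeastLessThanSuc_atLeastAtMost)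
qed

lemma induced_path_singleton: "\<not> E x x \<Longrightarrow> induced_path E {x}"
  unfolding induced_path_def by (rule exI[of _ "\<lambda>_. x"]) (auto simp: bij_betw_def)

lemma induced_path_cong:
  assumes "\<And>a b. a \<in> M \<Longrightarrow> b \<in> M \<Longrightarrow> E a b \<longleftrightarrow> E' a b"
  shows "induced_path E M \<longleftrightarrow> induced_path E' M"
proof -
  have edges_cong: "(\<forall>i<card M. \<forall>j<card M. E (f i) (f j) \<longleftrightarrow> P i j) \<longleftrightarrow>
                    (\<forall>i<card M. \<forall>j<card M. E' (f i) (f j) \<longleftrightarrow> P i j)"
    if "bij_betw f {0..<card M} M" for f P
    using assms bij_betw_apply[OF that] by simp
  show ?thesis unfolding induced_path_def by (intro ex_cong1 conj_cong refl) (rule edges_cong)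
qed

lemma induced_path_imp_induced_connected:
  assumes "induced_path E M"
  shows "induced_connected E M"
proof -
  obtain f where bij: "bij_betw f {0..<card M} M"
    and edge: "\<forall>i<card M. \<forall>j<card M. E (f i) (f j) \<longleftrightarrow> Suc i = j \<or> Suc j = i"
    using assms unfolding induced_path_def by blast
  define Q where "Q = (\<lambda>a b. E a b \<and> a \<in> M \<and> b \<in> M)"
  have to_and_from_first: "Q\<^sup>*\<^sup>* (f 0) (f j) \<and> Q\<^sup>*\<^sup>* (f j) (f 0)" if "j < card M" for j
    using that
  proof (induction j)
    case (Suc j)
    have "Q (f j) (f (Suc j))" "Q (f (Suc j)) (f j)"
      using edge Suc.prems bij_betw_apply[OF bij] unfolding Q_def by auto
    moreover have "Q\<^sup>*\<^sup>* (f 0) (f j)" "Q\<^sup>*\<^sup>* (f j) (f 0)" using Suc by simp_all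
    ultimately show ?case by (blast intro: rtranclp.rtrancl_into_rtrancl converse_rtranclp_into_rtranclp)
  qed simp
  have "Q\<^sup>*\<^sup>* x y" if "x \<in> M" "y \<in> M" for x y
  proof -
    have "x \<in> f ` {0..<card M}" "y \<in> f ` {0..<card M}" using that bij by (simp_all add: bij_betw_def)
    then obtain i j where "i < card M" "j < card M" "x = f i" "y = f j" by auto
    then show ?thesis using to_and_from_first by (meson rtranclp_trans)
  qed
  then show ?thesis unfolding induced_connected_def Q_def[symmetric] by blast
qed

lemma induced_connected_obtain_induced_path:
  assumes "simple_graph E" and "induced_connected E S" and "s \<in> S" "t \<in> S"
  obtains T where "T \<subseteq> S" "s \<in> T" "t \<in> T" "induced_path E T"
proof -
  define R where "R = (\<lambda>a b. E a b \<and> a \<in> S \<and> b \<in> S)"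
  have "R\<^sup>*\<^sup>* s t" using assms(2-4) unfolding induced_connected_def R_def[symmetric] by blast
  then have "\<exists>n. (R ^^ n) s t" by (rule rtranclp_imp_relpowp)
  then obtain n where "(R ^^ n) s t" and shortest: "\<forall>m<n. \<not> (R ^^ m) s t"
    unfolding exists_least_iff[of "\<lambda>n. (R ^^ n) s t"] by blast
  then obtain f where f0: "f 0 = s" and fn: "f n = t" and walk: "\<forall>k<n. R (f k) (f (Suc k))"
    unfolding relpowp_fun_conv by blast
  have "simple_graph R" using assms(1) unfolding simple_graph_def R_def by blast
  then have "induced_path R (f ` {0..n})"
    using shortest_walk_induced_path walk shortest f0 fn by blast
  moreover have sub: "f ` {0..n} \<subseteq> S"
  proof
    fix x assume "x \<in> f ` {0..n}"
    then obtain k where "k \<le> n" "x = f k" by auto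
    then show "x \<in> S" using walk fn assms(4) unfolding R_def by (cases "k < n") auto
  qed
  ultimately have "induced_path E (f ` {0..n})"
    using induced_path_cong[of "f ` {0..n}" R E] unfolding R_def by blast
  then show thesis using that sub f0 fn by force
qed

lemma induced_connected_obtain_small_connected:
  assumes "simple_graph E" and "\<forall>M. induced_path E M \<longrightarrow> card M \<le> m"
    and "induced_connected E S" and "s \<in> S" "t \<in> S"
  obtains T where "T \<subseteq> S" "s \<in> T" "t \<in> T" "card T \<le> m" "induced_connected E T"
proof -
  obtain T where T: "T \<subseteq> S" "s \<in> T" "t \<in> T" and path: "induced_path E T"
    using induced_connected_obtain_induced_path[OF assms(1,3-5)] .
  have "card T \<le> m" using assms(2) path by blast
  moreover have "induced_connected E T" using path by (rule induced_path_imp_induced_connected)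
  ultimately show thesis using that T by blast
qed

section \<open>Normal fans of Minkowski sums of simplices\<close>

definition maximizers :: "'n set \<Rightarrow> real^'n \<Rightarrow> 'n set" where
  "maximizers T u = {s\<in>T. \<forall>t\<in>T. u$t \<le> u$s}"

definition max_coord :: "'n set \<Rightarrow> real^'n \<Rightarrow> real" where
  "max_coord T u = Max ((\<lambda>s. u$s) ` T)"

definition max_face :: "(real^'n) set \<Rightarrow> real^'n \<Rightarrow> (real^'n) set" where
  "max_face P u = {x\<in>P. \<forall>y\<in>P. u \<bullet> y \<le> u \<bullet> x}"

lemma coord_le_max_coord: "t \<in> T \<Longrightarrow> u$t \<le> max_coord T u"
  unfolding max_coord_def by (rule Max_ge) auto

lemma max_coord_attained:
  assumes "T \<noteq> {}"
  obtains s where "s \<in> T" "u$s = max_coord T u"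
proof -
  have "Max ((\<lambda>s. u$s) ` T) \<in> (\<lambda>s. u$s) ` T" by (rule Max_in) (use assms in auto)
  then show thesis using that unfolding max_coord_def by auto
qed

lemma maximizers_iff:
  assumes "T \<noteq> {}"
  shows "s \<in> maximizers T u \<longleftrightarrow> s \<in> T \<and> u$s = max_coord T u"
proof
  assume s: "s \<in> maximizers T u"
  obtain s0 where "s0 \<in> T" "u$s0 = max_coord T u" using max_coord_attained[OF assms] .
  then have "u$s = max_coord T u"
    using s coord_le_max_coord[of s T u] unfolding maximizers_def by force
  then show "s \<in> T \<and> u$s = max_coord T u" using s unfolding maximizers_def by blast
next
  assume "s \<in> T \<and> u$s = max_coord T u"
  then show "s \<in> maximizers T u" unfolding maximizers_def using coord_le_max_coord by auto
qed

lemma maximizers_nonempty: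
  assumes "T \<noteq> {}"
  shows "maximizers T u \<noteq> {}"
proof -
  obtain s where "s \<in> T" "u$s = max_coord T u" using max_coord_attained[OF assms] .
  then have "s \<in> maximizers T u" using maximizers_iff[OF assms] by blast
  then show ?thesis by blast
qed

lemma maximizer_choice:
  assumes "\<forall>T\<in>F. T \<noteq> {}"
  obtains g where "\<forall>T\<in>F. g T \<in> maximizers T u"
proof -
  have "\<forall>T\<in>F. \<exists>s. s \<in> maximizers T u" using assms maximizers_nonempty by blast
  from bchoice[OF this] obtain g where "\<forall>T\<in>F. g T \<in> maximizers T u" by blast
  then show thesis by (rule that)
qed

lemma axis_in_simplex_of: "s \<in> T \<Longrightarrow> axis s 1 \<in> simplex_of T"
  unfolding simplex_of_def by (rule hull_inc) auto

lemma inner_le_max_coord: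
  assumes "y \<in> simplex_of T"
  shows "u \<bullet> y \<le> max_coord T u"
proof -
  have "simplex_of T \<subseteq> {y. u \<bullet> y \<le> max_coord T u}"
    unfolding simplex_of_def using coord_le_max_coord
    by (intro hull_minimal) (auto simp: convex_halfspace_le inner_axis)
  then show ?thesis using assms by auto
qed

text \<open>The u-maximal part of a simplex is the face spanned by the u-maximal vertices.\<close>
lemma inner_eq_max_coord_mono:
  assumes "T \<noteq> {}" and y: "y \<in> simplex_of T" "u \<bullet> y = max_coord T u"
    and sub: "maximizers T u \<subseteq> maximizers T v"
  shows "v \<bullet> y = max_coord T v"
proof -
  let ?V = "(\<lambda>s. axis s 1) ` T"
  let ?F = "simplex_of T \<inter> {y. u \<bullet> y = max_coord T u}"
  have "?F face_of convex hull ?V"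
    unfolding simplex_of_def using inner_le_max_coord
    by (intro face_of_Int_supporting_hyperplane_le convex_convex_hull) (auto simp: simplex_of_def)
  moreover have "compact ?V" by (intro finite_imp_compact) simp
  ultimately obtain W where W: "W \<subseteq> ?V" "?F = convex hull W"
    using face_of_convex_hull_subset by blast
  have "W \<subseteq> {y. v \<bullet> y = max_coord T v}"
  proof
    fix w assume "w \<in> W"
    then obtain s where s: "s \<in> T" "w = axis s 1" and "w \<in> ?F"
      using W by (auto simp: hull_inc)
    then have "s \<in> maximizers T u" using maximizers_iff[OF assms(1)] by (simp add: inner_axis)
    then show "w \<in> {y. v \<bullet> y = max_coord T v}"
      using sub maximizers_iff[OF assms(1)] s by (auto simp: inner_axis)
  qed
  then have "convex hull W \<subseteq> {y. v \<bullet> y = max_coord T v}"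
    by (intro hull_minimal) (auto simp: convex_hyperplane)
  moreover have "y \<in> ?F" using y by simp
  ultimately show ?thesis using W(2) by blast
qed

lemma inner_le_sum_max_coord:
  assumes "x \<in> minkowski_sum F simplex_of"
  shows "u \<bullet> x \<le> (\<Sum>T\<in>F. max_coord T u)"
proof -
  obtain p where p: "\<forall>T\<in>F. p T \<in> simplex_of T" "x = (\<Sum>T\<in>F. p T)"
    using assms unfolding minkowski_sum_def by auto
  have "u \<bullet> x = (\<Sum>T\<in>F. u \<bullet> p T)" using p(2) by (simp add: inner_sum_right)
  also have "\<dots> \<le> (\<Sum>T\<in>F. max_coord T u)"
    using p(1) by (intro sum_mono inner_le_max_coord) auto
  finally show ?thesis .
qed

lemma sum_axis_in_minkowski_sum:
  "\<forall>T\<in>F. g T \<in> T \<Longrightarrow> (\<Sum>T\<in>F. axis (g T) 1) \<in> minkowski_sum F simplex_of"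
  unfolding minkowski_sum_def by (auto intro!: exI[of _ "\<lambda>T. axis (g T) 1"] axis_in_simplex_of)

lemma inner_sum_axis_maximizers:
  assumes "\<forall>T\<in>F. T \<noteq> {}" "\<forall>T\<in>F. g T \<in> maximizers T u"
  shows "u \<bullet> (\<Sum>T\<in>F. axis (g T) 1) = (\<Sum>T\<in>F. max_coord T u)"
  unfolding inner_sum_right
proof (intro sum.cong refl)
  fix T assume "T \<in> F"
  then show "u \<bullet> axis (g T) 1 = max_coord T u"
    using assms maximizers_iff[of T "g T" u] by (simp add: inner_axis)
qed

lemma mem_max_face_minkowski_sum_simplices_iff:
  assumes ne: "\<forall>T\<in>F. T \<noteq> {}"
  shows "x \<in> max_face (minkowski_sum F simplex_of) u \<longleftrightarrow>
         x \<in> minkowski_sum F simplex_of \<and> u \<bullet> x = (\<Sum>T\<in>F. max_coord T u)"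
proof -
  obtain g where g: "\<forall>T\<in>F. g T \<in> maximizers T u"
    using maximizer_choice[OF ne] .
  let ?P = "minkowski_sum F simplex_of" and ?m = "\<Sum>T\<in>F. max_coord T u"
  let ?z = "\<Sum>T\<in>F. axis (g T) 1"
  have z: "?z \<in> ?P" "u \<bullet> ?z = ?m"
    using sum_axis_in_minkowski_sum inner_sum_axis_maximizers[OF ne g] g
    unfolding maximizers_def by auto
  have le: "u \<bullet> y \<le> ?m" if "y \<in> ?P" for y
    using inner_le_sum_max_coord that .
  show ?thesis
  proof
    assume "x \<in> max_face ?P u"
    then have "x \<in> ?P" "u \<bullet> ?z \<le> u \<bullet> x" using z unfolding max_face_def by auto
    moreover from this have "u \<bullet> x = ?m" using le z by fastforce
    ultimately show "x \<in> ?P \<and> u \<bullet> x = ?m" by blast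
  next
    assume "x \<in> ?P \<and> u \<bullet> x = ?m"
    then show "x \<in> max_face ?P u" unfolding max_face_def using le by auto
  qed
qed

lemma sum_axis_maximizers_in_max_face:
  assumes "\<forall>T\<in>F. T \<noteq> {}" "\<forall>T\<in>F. g T \<in> maximizers T u"
  shows "(\<Sum>T\<in>F. axis (g T) 1) \<in> max_face (minkowski_sum F simplex_of) u"
proof -
  have "\<forall>T\<in>F. g T \<in> T" using assms(2) unfolding maximizers_def by blast
  then have "(\<Sum>T\<in>F. axis (g T) 1) \<in> minkowski_sum F simplex_of"
    by (rule sum_axis_in_minkowski_sum)
  then show ?thesis
    using mem_max_face_minkowski_sum_simplices_iff[OF assms(1)] inner_sum_axis_maximizers[OF assms] by blast
qed

lemma max_face_minkowski_sum_simplices_mono: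
  assumes ne: "\<forall>T\<in>F. T \<noteq> {}" and "finite F"
    and sub: "\<forall>T\<in>F. maximizers T u \<subseteq> maximizers T v"
  shows "max_face (minkowski_sum F simplex_of) u \<subseteq> max_face (minkowski_sum F simplex_of) v"
proof
  fix x assume "x \<in> max_face (minkowski_sum F simplex_of) u"
  then have x: "x \<in> minkowski_sum F simplex_of" "u \<bullet> x = (\<Sum>T\<in>F. max_coord T u)"
    using mem_max_face_minkowski_sum_simplices_iff[OF ne] by auto
  obtain p where p: "\<forall>T\<in>F. p T \<in> simplex_of T" "x = (\<Sum>T\<in>F. p T)"
    using x(1) unfolding minkowski_sum_def by auto
  have sum_eq: "(\<Sum>T\<in>F. u \<bullet> p T) = (\<Sum>T\<in>F. max_coord T u)"
    using p(2) x(2) by (simp add: inner_sum_right)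
  have "u \<bullet> p T = max_coord T u" if "T \<in> F" for T
    by (rule sum_mono_inv[OF sum_eq]) (use p(1) inner_le_max_coord that \<open>finite F\<close> in auto)
  then have "v \<bullet> p T = max_coord T v" if "T \<in> F" for T
    using inner_eq_max_coord_mono[of T "p T" u v] p(1) ne sub that by blast
  then have "v \<bullet> x = (\<Sum>T\<in>F. max_coord T v)"
    using p(2) by (simp add: inner_sum_right)
  then show "x \<in> max_face (minkowski_sum F simplex_of) v"
    using mem_max_face_minkowski_sum_simplices_iff[OF ne, of x v] x(1) by blast
qed

lemma maximizers_subset_of_max_face_subset:
  assumes ne: "\<forall>T\<in>F. T \<noteq> {}" and "finite F"
    and sub: "max_face (minkowski_sum F simplex_of) u \<subseteq> max_face (minkowski_sum F simplex_of) v"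
    and T0: "T0 \<in> F"
  shows "maximizers T0 u \<subseteq> maximizers T0 v"
proof
  fix s assume s: "s \<in> maximizers T0 u"
  obtain g where g: "\<forall>T\<in>F. g T \<in> maximizers T u"
    using maximizer_choice[OF ne] .
  define g' where "g' = g(T0 := s)"
  have g': "\<forall>T\<in>F. g' T \<in> maximizers T u" using g s by (simp add: g'_def)
  have "(\<Sum>T\<in>F. axis (g' T) 1) \<in> max_face (minkowski_sum F simplex_of) v"
    using sub sum_axis_maximizers_in_max_face[OF ne g'] by blast
  then have "v \<bullet> (\<Sum>T\<in>F. axis (g' T) 1) = (\<Sum>T\<in>F. max_coord T v)"
    using mem_max_face_minkowski_sum_simplices_iff[OF ne] by blast
  then have "(\<Sum>T\<in>F. v $ g' T) = (\<Sum>T\<in>F. max_coord T v)"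
    by (simp add: inner_sum_right inner_axis)
  moreover have "v $ g' T \<le> max_coord T v" if "T \<in> F" for T
    using g' that coord_le_max_coord unfolding maximizers_def by blast
  ultimately have "v $ g' T0 = max_coord T0 v"
    using sum_mono_inv[of "\<lambda>T. v $ g' T" F "\<lambda>T. max_coord T v" T0] T0 \<open>finite F\<close> by blast
  moreover have "s \<in> T0" using s unfolding maximizers_def by blast
  ultimately show "s \<in> maximizers T0 v"
    using maximizers_iff[of T0 s v] ne T0 unfolding g'_def by simp
qed

lemma max_face_minkowski_sum_simplices_subset_iff:
  assumes "\<forall>T\<in>F. T \<noteq> {}" and "finite F"
  shows "max_face (minkowski_sum F simplex_of) u \<subseteq> max_face (minkowski_sum F simplex_of) v \<longleftrightarrow>
         (\<forall>T\<in>F. maximizers T u \<subseteq> maximizers T v)"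
  using max_face_minkowski_sum_simplices_mono[OF assms]
    maximizers_subset_of_max_face_subset[OF assms] by blast

lemma minkowski_sum_insert:
  assumes "a \<notin> F" "finite F"
  shows "minkowski_sum (insert a F) P = P a + minkowski_sum F P"
proof
  show "minkowski_sum (insert a F) P \<subseteq> P a + minkowski_sum F P"
  proof
    fix x assume "x \<in> minkowski_sum (insert a F) P"
    then obtain p where p: "\<forall>S\<in>insert a F. p S \<in> P S" "x = (\<Sum>S\<in>insert a F. p S)"
      unfolding minkowski_sum_def by auto
    then have "x = p a + (\<Sum>S\<in>F. p S)" "(\<Sum>S\<in>F. p S) \<in> minkowski_sum F P"
      using assms unfolding minkowski_sum_def by auto
    then show "x \<in> P a + minkowski_sum F P" using p(1) by (auto intro: set_plus_intro)
  qed
next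
  show "P a + minkowski_sum F P \<subseteq> minkowski_sum (insert a F) P"
  proof
    fix x assume "x \<in> P a + minkowski_sum F P"
    then obtain y q where "y \<in> P a" "\<forall>S\<in>F. q S \<in> P S" "x = y + (\<Sum>S\<in>F. q S)"
      unfolding minkowski_sum_def by (auto elim: set_plus_elim)
    moreover have "(\<Sum>S\<in>F. (q(a := y)) S) = (\<Sum>S\<in>F. q S)"
      using assms(1) by (intro sum.cong) auto
    ultimately show "x \<in> minkowski_sum (insert a F) P"
      unfolding minkowski_sum_def using assms by (intro CollectI exI[of _ "q(a := y)"]) auto
  qed
qed

lemma polytope_minkowski_sum_simplices:
  assumes "finite F"
  shows "polytope (minkowski_sum F simplex_of)"
  using assms
proof (induction F rule: finite_induct)
  case empty
  show ?case using polytope_sing[of 0] unfolding minkowski_sum_def by simp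
next
  case (insert a F)
  then obtain V where V: "finite V" "minkowski_sum F simplex_of = convex hull V"
    unfolding polytope_def by blast
  have "minkowski_sum (insert a F) simplex_of = convex hull ((\<lambda>s. axis s 1) ` a + V)"
    using insert(1,2) V(2) by (simp add: minkowski_sum_insert simplex_of_def convex_hull_set_plus)
  then show ?case using V(1) by (simp add: polytope_convex_hull finite_set_plus)
qed

lemma normal_cone_eq: "F \<subseteq> P \<Longrightarrow> normal_cone P F = {v. F \<subseteq> max_face P v}"
  unfolding normal_cone_def max_face_def by auto

lemma max_face_eq_hyperplane_section:
  assumes "x0 \<in> max_face P u"
  shows "max_face P u = P \<inter> {x. u \<bullet> x = u \<bullet> x0}"
  using assms unfolding max_face_def by (auto intro: order_antisym)

lemma max_face_face_of:
  assumes "convex P" "max_face P u \<noteq> {}"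
  shows "max_face P u face_of P"
proof -
  obtain x0 where x0: "x0 \<in> max_face P u" using assms(2) by blast
  have "P \<inter> {x. u \<bullet> x = u \<bullet> x0} face_of P"
    using x0 assms(1) unfolding max_face_def by (intro face_of_Int_supporting_hyperplane_le) auto
  then show ?thesis using max_face_eq_hyperplane_section[OF x0] by simp
qed

lemma normal_fan_polytope:
  assumes "polytope P" and ne: "\<And>u. max_face P u \<noteq> {}"
  shows "normal_fan P = range (\<lambda>u. {v. max_face P u \<subseteq> max_face P v})"
proof (intro equalityI subsetI)
  fix C assume "C \<in> normal_fan P"
  then obtain F where F: "C = normal_cone P F" "F face_of P" "F \<noteq> {}"
    unfolding normal_fan_def by auto
  then have "F exposed_face_of P"
    using exposed_face_of_polyhedron[OF polytope_imp_polyhedron[OF assms(1)]] by blast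
  then obtain a b where ab: "P \<subseteq> {x. a \<bullet> x \<le> b}" "F = P \<inter> {x. a \<bullet> x = b}"
    unfolding exposed_face_of_def by blast
  obtain x0 where "x0 \<in> F" using F(3) by blast
  then have "x0 \<in> max_face P a" "a \<bullet> x0 = b" using ab unfolding max_face_def by auto
  then have "F = max_face P a" using ab(2) max_face_eq_hyperplane_section by blast
  moreover have "C = {v. F \<subseteq> max_face P v}"
    using F(1) normal_cone_eq[OF face_of_imp_subset[OF F(2)]] by simp
  ultimately show "C \<in> range (\<lambda>u. {v. max_face P u \<subseteq> max_face P v})" by blast
next
  fix C assume "C \<in> range (\<lambda>u. {v. max_face P u \<subseteq> max_face P v})"
  then obtain u where "C = {v. max_face P u \<subseteq> max_face P v}" by blast
  then have "C = normal_cone P (max_face P u)"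
    using normal_cone_eq[of "max_face P u" P] unfolding max_face_def by simp
  moreover have "max_face P u face_of P"
    using max_face_face_of polytope_imp_convex[OF assms(1)] ne by blast
  ultimately show "C \<in> normal_fan P" unfolding normal_fan_def using ne[of u] by blast
qed

lemma normal_fan_minkowski_sum_simplices:
  assumes "finite F" "\<forall>T\<in>F. T \<noteq> {}"
  shows "normal_fan (minkowski_sum F simplex_of) =
         range (\<lambda>u. {v. \<forall>T\<in>F. maximizers T u \<subseteq> maximizers T v})"
proof -
  have "max_face (minkowski_sum F simplex_of) u \<noteq> {}" for u
  proof -
    obtain g where "\<forall>T\<in>F. g T \<in> maximizers T u" using maximizer_choice[OF assms(2)] .
    then show ?thesis using sum_axis_maximizers_in_max_face[OF assms(2)] by blast
  qed
  then show ?thesis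
    using normal_fan_polytope[OF polytope_minkowski_sum_simplices[OF assms(1)]]
      max_face_minkowski_sum_simplices_subset_iff[OF assms(2,1)] by simp
qed

lemma maximizers_subset_of_covering:
  assumes cover: "\<And>s t. s \<in> S \<Longrightarrow> t \<in> S \<Longrightarrow> \<exists>T\<in>G. T \<subseteq> S \<and> s \<in> T \<and> t \<in> T"
    and sub: "\<forall>T\<in>G. maximizers T u \<subseteq> maximizers T v"
  shows "maximizers S u \<subseteq> maximizers S v"
proof
  fix s assume s: "s \<in> maximizers S u"
  have "v $ t \<le> v $ s" if t: "t \<in> S" for t
  proof -
    have "s \<in> S" using s unfolding maximizers_def by blast
    then obtain T where T: "T \<in> G" "T \<subseteq> S" "s \<in> T" "t \<in> T"
      using cover[OF \<open>s \<in> S\<close> t] by blast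
    then have "s \<in> maximizers T u" using s unfolding maximizers_def by blast
    then have "s \<in> maximizers T v" using sub T(1) by blast
    then show ?thesis using T(4) unfolding maximizers_def by blast
  qed
  then show "s \<in> maximizers S v" using s unfolding maximizers_def by auto
qed

lemma normal_fan_minkowski_sum_simplices_covering:
  assumes "finite F" "\<forall>T\<in>F. T \<noteq> {}" "G \<subseteq> F"
    and cover: "\<And>S s t. S \<in> F \<Longrightarrow> s \<in> S \<Longrightarrow> t \<in> S \<Longrightarrow> \<exists>T\<in>G. T \<subseteq> S \<and> s \<in> T \<and> t \<in> T"
  shows "normal_fan (minkowski_sum F simplex_of) = normal_fan (minkowski_sum G simplex_of)"
proof -
  have "maximizers S u \<subseteq> maximizers S v"
    if "S \<in> F" "\<forall>T\<in>G. maximizers T u \<subseteq> maximizers T v" for S u v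
    using maximizers_subset_of_covering[of S G u v] cover[OF that(1)] that(2) by blast
  then have "(\<forall>T\<in>F. maximizers T u \<subseteq> maximizers T v) \<longleftrightarrow> (\<forall>T\<in>G. maximizers T u \<subseteq> maximizers T v)"
    for u v
    using assms(3) by blast
  moreover have "finite G" "\<forall>T\<in>G. T \<noteq> {}" using assms(1-3) finite_subset by auto
  ultimately show ?thesis
    unfolding normal_fan_minkowski_sum_simplices[OF assms(1,2)]
      normal_fan_minkowski_sum_simplices[OF \<open>finite G\<close> \<open>\<forall>T\<in>G. T \<noteq> {}\<close>] by simp
qed

theorem mainTheorem5:
  fixes E :: "'n::finite \<Rightarrow> 'n \<Rightarrow> bool" and M :: "'n set" and k :: nat
  assumes "simple_graph E"
    and "graph_connected E"
    and "induced_path E M"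
    and "\<forall>M'. induced_path E M' \<longrightarrow> card M' \<le> card M"
    and "k \<ge> card M"
  shows "normal_fan (graph_polytope E k) = normal_fan (graph_polytope E (card M - 1))"
proof -
  define F where "F m = {S. S \<noteq> {} \<and> card S \<le> m + 1 \<and> induced_connected E S}" for m
  have polytope_F: "graph_polytope E m = minkowski_sum (F m) simplex_of" for m
    unfolding graph_polytope_def F_def ..
  obtain x :: 'n where True by simp
  have "\<not> E x x" using assms(1) unfolding simple_graph_def by blast
  then have "card M \<ge> 1" using assms(4) induced_path_singleton by fastforce
  have "\<exists>T\<in>F (card M - 1). T \<subseteq> S \<and> s \<in> T \<and> t \<in> T"
    if S: "S \<in> F k" and st: "s \<in> S" "t \<in> S" for S s t
  proof -
    have "induced_connected E S" using S unfolding F_def by blast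
    then obtain T where "T \<subseteq> S" "s \<in> T" "t \<in> T" "card T \<le> card M" "induced_connected E T"
      using induced_connected_obtain_small_connected[OF assms(1,4) _ st] by blast
    then show ?thesis using \<open>card M \<ge> 1\<close> unfolding F_def by auto
  qed
  moreover have "F (card M - 1) \<subseteq> F k" using assms(5) \<open>card M \<ge> 1\<close> unfolding F_def by auto
  moreover have "\<forall>T\<in>F k. T \<noteq> {}" unfolding F_def by blast
  ultimately show ?thesis
    unfolding polytope_F by (intro normal_fan_minkowski_sum_simplices_covering) auto
qed

end
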